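(* Let $R>0$, let $E\subset\mathbb{R}^d$ be a body and let $a\in\partial\,co_R(E)\setminus E$. Then there exists an open ball $B$ of radius $R$ that $R$-supports $co_R(E)$ at $a$ (i.e. $a\in\partial B$, $B\cap co_R(E)=\emptyset$). Moreover, for such a ball $B$, assumed after translation to be centered at the origin $o$, with $S=\partial B$: (i) $\partial E\cap S$ contains at least two points; (ii) letting $F=\{\lambda x:\lambda\ge0,\ x\in\partial E\cap S\}$ and $C=co(F)$, if $C$ is pointed ($C\cap(-C)=\{o\}$), then there exist distinct points $x_1,\dots,x_s\in\partial E\cap S$, with $2\le s\le d$, such that $$a\in co^S_{sph}(\{x_1,\dots,x_s\}).$$
   Context: A body is a nonempty closed subset of $\mathbb{R}^d$; $co(\cdot)$ denotes convex hull. Fix $R>0$. The $R$-hulloid of a body $E$ is $co_R(E)=\bigcap\{\mathbb{R}^d\setminus B : B \text{ an open ball of radius } R,\ B\cap E=\emptyset\}$ (equal to $\mathbb{R}^d$ if no such ball exists). For a sphere $S$ centered at $o$ and $\mathcal K\subset S$, with $K=\{\lambda v:\lambda\ge0,\ v\in\mathcal K\}$, the spherical convex hull is $co^S_{sph}(\mathcal K)=co(K)\cap S$. *)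

theory Defs
  imports "HOL-Analysis.Analysis"
begin

definition body :: "'a::euclidean_space set \<Rightarrow> bool" where
  "body E \<longleftrightarrow> E \<noteq> {} \<and> closed E"

definition coR :: "real \<Rightarrow> 'a::euclidean_space set \<Rightarrow> 'a set" where
  "coR R E = \<Inter> {- ball c R | c. ball c R \<inter> E = {}}"

definition cone_at :: "'a::euclidean_space \<Rightarrow> 'a set \<Rightarrow> 'a set" where
  "cone_at p K = {p + l *\<^sub>R (v - p) | l v. l \<ge> 0 \<and> v \<in> K}"

text \<open>Spherical convex hull of K on the sphere of centre p and radius R
  (translated so that p plays the role of the origin).\<close>
definition co_sph :: "'a::euclidean_space \<Rightarrow> real \<Rightarrow> 'a set \<Rightarrow> 'a set" where
  "co_sph p R K = convex hull (cone_at p K) \<inter> sphere p R"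

definition pointed_at :: "'a::euclidean_space \<Rightarrow> 'a set \<Rightarrow> bool" where
  "pointed_at p C \<longleftrightarrow> C \<inter> (\<lambda>y. 2 *\<^sub>R p - y) ` C = {p}"

end

theory Submission
  imports Defs
begin

text \<open>
  A supporting ball is given by an admissible centre nearest to a. Its centre c cannot be moved
  by a small step along a direction u with u \<bullet> (a - c) > 0 and u \<bullet> (x - c) < 0 for all contact
  points x \<in> E \<inter> sphere c R: the moved ball would still miss E but contain a, contradicting
  a \<in> co_R(E). With u = a - p for a point p \<noteq> a of the sphere this shows that the contact set
  is never contained in {p}, whence two contact points. In the pointed case the same obstruction
  is a Gordan-type alternative placing a - c in the closed convex cone spanned by the contact
  directions x - c; normalising these onto a hyperplane w \<bullet> y = 1 and applying Caratheodory's
  theorem inside it bounds the number of directions by d, while a \<notin> E forces at least two.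
\<close>

lemma mem_coR_iff: "y \<in> coR R E \<longleftrightarrow> (\<forall>c. ball c R \<inter> E = {} \<longrightarrow> y \<notin> ball c R)"
  unfolding coR_def by blast

lemma coR_subset_Compl_ball: "ball c R \<inter> E = {} \<Longrightarrow> coR R E \<subseteq> - ball c R"
  by (auto simp: mem_coR_iff)

lemma closed_coR: "closed (coR R E)"
  unfolding coR_def by (rule closed_Inter) auto

lemma subset_coR: "E \<subseteq> coR R E"
  unfolding coR_def by auto

lemma closed_centres_ball_disjoint:
  fixes E :: "'a::metric_space set"
  shows "closed {c. ball c R \<inter> E = {}}"
proof -
  have "{c. ball c R \<inter> E = {}} = - (\<Union>x\<in>E. ball x R)"
    by (auto simp: dist_commute)
  then show ?thesis by (metis closed_Compl open_UN open_ball)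
qed

lemma supporting_ball_exists:
  fixes E :: "'a::euclidean_space set"
  assumes a: "a \<in> frontier (coR R E)"
  shows "\<exists>c. a \<in> sphere c R \<and> ball c R \<inter> coR R E = {}"
proof -
  define A where "A = {c. ball c R \<inter> E = {}}"
  have near: "\<exists>c\<in>A. dist a c < R + \<epsilon>" if "\<epsilon> > 0" for \<epsilon>
  proof -
    obtain y where "y \<notin> coR R E" "dist a y < \<epsilon>"
      using a \<open>\<epsilon> > 0\<close> unfolding frontier_straddle by blast
    then obtain c where "c \<in> A" "dist y c < R"
      unfolding mem_coR_iff A_def by (auto simp: dist_commute)
    then show ?thesis
      using dist_triangle[of a c y] \<open>dist a y < \<epsilon>\<close> by (intro bexI[of _ c]) auto
  qed
  have "A \<noteq> {}" using near[of 1] by auto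
  then obtain c where c: "c \<in> A" and c_min: "\<And>c'. c' \<in> A \<Longrightarrow> dist a c \<le> dist a c'"
    using distance_attains_inf closed_centres_ball_disjoint unfolding A_def by metis
  have "dist a c \<le> R"
  proof (rule ccontr)
    assume "\<not> dist a c \<le> R"
    then obtain c' where "c' \<in> A" "dist a c' < dist a c"
      using near[of "dist a c - R"] by auto
    then show False using c_min by force
  qed
  moreover have "a \<in> coR R E"
    using a closed_coR frontier_subset_closed by blast
  then have "a \<notin> ball c R"
    using coR_subset_Compl_ball c unfolding A_def by blast
  ultimately have "a \<in> sphere c R" by (simp add: dist_commute)
  then show ?thesis
    using coR_subset_Compl_ball c unfolding A_def by blast
qed

lemma norm_diff_shift_sq:
  fixes x c u :: "'a::real_inner"
  shows "(norm (x - (c + e *\<^sub>R u)))\<^sup>2 = (norm (x - c))\<^sup>2 - 2 * e * (u \<bullet> (x - c)) + e\<^sup>2 * (norm u)\<^sup>2"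
  unfolding power2_norm_eq_inner
  by (simp add: inner_diff_left inner_diff_right inner_add_left inner_add_right
      algebra_simps inner_commute power2_eq_square)

lemma dist_le_dist_shift_away:
  fixes y c u :: "'a::real_inner"
  assumes "u \<bullet> (y - c) \<le> 0" and "0 \<le> e"
  shows "dist c y \<le> dist (c + e *\<^sub>R u) y"
proof -
  have "2 * e * (u \<bullet> (y - c)) \<le> 0"
    using assms by (simp add: mult_nonneg_nonpos)
  moreover have "0 \<le> e\<^sup>2 * (norm u)\<^sup>2" by simp
  ultimately have "(norm (y - c))\<^sup>2 \<le> (norm (y - (c + e *\<^sub>R u)))\<^sup>2"
    unfolding norm_diff_shift_sq by linarith
  then have "norm (y - c) \<le> norm (y - (c + e *\<^sub>R u))"
    by (rule power2_le_imp_le) simp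
  then show ?thesis by (simp add: dist_norm norm_minus_commute)
qed

lemma eventually_mem_ball_shift:
  fixes a c u :: "'a::real_inner"
  assumes ac: "dist c a = R" and u: "0 < u \<bullet> (a - c)"
  shows "eventually (\<lambda>e. a \<in> ball (c + e *\<^sub>R u) R) (at_right 0)"
  unfolding eventually_at_right_field
proof (intro exI conjI allI impI)
  let ?b = "2 * (u \<bullet> (a - c)) / ((norm u)\<^sup>2 + 1)"
  show "0 < ?b" using u by (simp add: add_nonneg_pos)
  fix e :: real assume "0 < e" "e < ?b"
  then have "e * (norm u)\<^sup>2 < 2 * (u \<bullet> (a - c))"
    by (smt (verit, best) mult_left_mono pos_less_divide_eq zero_le_power2 add_nonneg_pos)
  then have "e\<^sup>2 * (norm u)\<^sup>2 < 2 * e * (u \<bullet> (a - c))"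
    using \<open>0 < e\<close> by (simp add: power2_eq_square mult.assoc)
  then have "(norm (a - (c + e *\<^sub>R u)))\<^sup>2 < R\<^sup>2"
    using ac by (simp add: norm_diff_shift_sq dist_norm norm_minus_commute)
  then show "a \<in> ball (c + e *\<^sub>R u) R"
    using ac by (auto simp: dist_norm norm_minus_commute intro: power2_less_imp_less)
qed

lemma gap_closed_disjoint_cball:
  fixes F :: "'a::heine_borel set"
  assumes "closed F" and "F \<inter> cball c R = {}"
  obtains \<eta> where "\<eta> > 0" "\<forall>y\<in>F. R + \<eta> \<le> dist c y"
proof (cases "F = {}")
  case False
  then obtain y0 where "y0 \<in> F" "\<And>y. y \<in> F \<Longrightarrow> dist c y0 \<le> dist c y"
    using distance_attains_inf assms(1) by metis
  moreover have "R < dist c y0" using \<open>y0 \<in> F\<close> assms(2) by auto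
  ultimately show ?thesis using that[of "dist c y0 - R"] by force
qed (use that[of 1] in auto)

lemma eventually_ball_shift_disjoint:
  fixes E :: "'a::euclidean_space set"
  assumes E: "closed E" and disj: "ball c R \<inter> E = {}"
    and contact: "\<forall>x\<in>E \<inter> sphere c R. u \<bullet> (x - c) < 0"
  shows "eventually (\<lambda>e. ball (c + e *\<^sub>R u) R \<inter> E = {}) (at_right 0)"
proof -
  define F where "F = E \<inter> {x. 0 \<le> u \<bullet> (x - c)}"
  have "closed F"
    unfolding F_def by (intro closed_Int E closed_Collect_le continuous_intros)
  moreover have "F \<inter> cball c R = {}"
  proof (rule equals0I)
    fix y assume y: "y \<in> F \<inter> cball c R"
    then have "y \<notin> ball c R" using disj unfolding F_def by blast
    then have "dist c y = R" using y by simp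
    then have "y \<in> E \<inter> sphere c R" using y unfolding F_def by simp
    then have "u \<bullet> (y - c) < 0" using contact by blast
    then show False using y unfolding F_def by simp
  qed
  ultimately obtain \<eta> where "\<eta> > 0" and \<eta>: "\<forall>y\<in>F. R + \<eta> \<le> dist c y"
    by (rule gap_closed_disjoint_cball)
  show ?thesis
    unfolding eventually_at_right_field
  proof (intro exI conjI allI impI)
    show "0 < \<eta> / (norm u + 1)" using \<open>\<eta> > 0\<close> by (simp add: add_nonneg_pos)
    fix e :: real assume e: "0 < e" "e < \<eta> / (norm u + 1)"
    show "ball (c + e *\<^sub>R u) R \<inter> E = {}"
    proof (rule ccontr)
      assume "ball (c + e *\<^sub>R u) R \<inter> E \<noteq> {}"
      then obtain y where y: "y \<in> E" "dist (c + e *\<^sub>R u) y < R" by auto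
      show False
      proof (cases "y \<in> F")
        case True
        have "e * norm u < \<eta>"
          using e \<open>\<eta> > 0\<close> by (smt (verit) mult_left_mono norm_ge_zero pos_less_divide_eq)
        then show False
          using bspec[OF \<eta> True] y dist_triangle[of c y "c + e *\<^sub>R u"] e by (simp add: dist_norm)
      next
        case False
        then have "u \<bullet> (y - c) \<le> 0" using y unfolding F_def by auto
        then have "dist c y < R"
          using dist_le_dist_shift_away[of u y c e] e y(2) by linarith
        then show False using y(1) disj by auto
      qed
    qed
  qed
qed

lemma exists_contact_point_in_halfspace:
  fixes E :: "'a::euclidean_space set"
  assumes E: "closed E" and a: "a \<in> coR R E" "dist c a = R"
    and disj: "ball c R \<inter> E = {}" and u: "0 < u \<bullet> (a - c)"
  shows "\<exists>x\<in>E \<inter> sphere c R. 0 \<le> u \<bullet> (x - c)"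
proof (rule ccontr)
  assume "\<not> ?thesis"
  then have "\<forall>x\<in>E \<inter> sphere c R. u \<bullet> (x - c) < 0" by (auto simp: not_le)
  then have "eventually (\<lambda>e. ball (c + e *\<^sub>R u) R \<inter> E = {} \<and> a \<in> ball (c + e *\<^sub>R u) R) (at_right 0)"
    using eventually_ball_shift_disjoint[OF E disj] eventually_mem_ball_shift[OF a(2) u]
    by (simp add: eventually_conj_iff)
  then obtain e where "ball (c + e *\<^sub>R u) R \<inter> E = {}" "a \<in> ball (c + e *\<^sub>R u) R"
    using eventually_happens trivial_limit_at_right_real by blast
  then show False using a(1) unfolding mem_coR_iff by blast
qed

lemma inner_chord_sphere:
  fixes a p c :: "'a::real_inner"
  assumes "norm (a - c) = norm (p - c)"
  shows "2 * ((a - p) \<bullet> (a - c)) = (norm (a - p))\<^sup>2"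
    and "2 * ((a - p) \<bullet> (p - c)) = - (norm (a - p))\<^sup>2"
proof -
  have "(a - c) \<bullet> (a - c) = (p - c) \<bullet> (p - c)"
    using assms by (simp add: dot_square_norm)
  moreover have "a - p = (a - c) - (p - c)" by simp
  ultimately show "2 * ((a - p) \<bullet> (a - c)) = (norm (a - p))\<^sup>2"
    and "2 * ((a - p) \<bullet> (p - c)) = - (norm (a - p))\<^sup>2"
    unfolding power2_norm_eq_inner
    by (simp_all only:) (simp_all add: inner_diff_left inner_diff_right inner_commute)
qed

lemma two_contact_points:
  fixes E :: "'a::euclidean_space set"
  assumes "R > 0" and E: "closed E" and a: "a \<in> coR R E" "dist c a = R"
    and disj: "ball c R \<inter> E = {}" and "a \<notin> E"
  shows "\<exists>x y. x \<noteq> y \<and> x \<in> E \<inter> sphere c R \<and> y \<in> E \<inter> sphere c R"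
proof -
  have other: "\<exists>x\<in>E \<inter> sphere c R. x \<noteq> p" if p: "p \<in> sphere c R" "p \<noteq> a" for p
  proof -
    have eq: "norm (a - c) = norm (p - c)"
      using a(2) p(1) by (simp add: dist_norm norm_minus_commute)
    have "0 < (norm (a - p))\<^sup>2" using p(2) by simp
    then have "0 < (a - p) \<bullet> (a - c)" and p_behind: "(a - p) \<bullet> (p - c) < 0"
      using inner_chord_sphere[OF eq] by linarith+
    then obtain x where "x \<in> E \<inter> sphere c R" "0 \<le> (a - p) \<bullet> (x - c)"
      using exists_contact_point_in_halfspace[OF E a disj] by blast
    then show ?thesis using p_behind by (intro bexI[of _ x]) auto
  qed
  have "2 *\<^sub>R c - a \<in> sphere c R"
    using a(2) by (simp add: dist_norm scaleR_2 norm_minus_commute)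
  moreover have "2 *\<^sub>R c - a \<noteq> a"
  proof
    assume "2 *\<^sub>R c - a = a"
    then have "2 *\<^sub>R (c - a) = 0" by (simp add: algebra_simps scaleR_2)
    then show False using a(2) \<open>R > 0\<close> by simp
  qed
  ultimately obtain x where x: "x \<in> E \<inter> sphere c R" using other by blast
  then obtain y where "y \<in> E \<inter> sphere c R" "y \<noteq> x"
    using other[of x] \<open>a \<notin> E\<close> by blast
  then show ?thesis using x by blast
qed

lemma closed_Int_closure_disjoint_open_subset_frontier:
  assumes "closed E" "open U" "U \<inter> E = {}"
  shows "E \<inter> closure U \<subseteq> frontier E"
proof
  fix x assume x: "x \<in> E \<inter> closure U"
  have "x \<notin> interior E"
  proof
    assume "x \<in> interior E"
    then have "interior E \<inter> U \<noteq> {}"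
      using x open_Int_closure_eq_empty[OF open_interior] by blast
    then show False using assms(3) interior_subset by blast
  qed
  then show "x \<in> frontier E"
    using x closure_subset unfolding frontier_def by blast
qed

lemma convex_hull_conic_hull:
  assumes "S \<noteq> {}"
  shows "convex hull (conic hull S) = convex_cone hull S"
proof
  show "convex hull (conic hull S) \<subseteq> convex_cone hull S"
    by (intro hull_minimal conic_hull_subset_convex_cone_hull convex_convex_cone_hull)
  show "convex_cone hull S \<subseteq> convex hull (conic hull S)"
  proof
    fix x assume "x \<in> convex_cone hull S"
    then obtain r p where x: "x = r *\<^sub>R p" and "0 \<le> r" and p: "p \<in> convex hull S"
      using assms by (auto simp: convex_cone_hull_separate_nonempty conic_hull_explicit)
    have "x \<in> convex hull ((\<lambda>y. r *\<^sub>R y) ` S)"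
      unfolding x convex_hull_scaling using p by (rule imageI)
    moreover have "(\<lambda>y. r *\<^sub>R y) ` S \<subseteq> conic hull S"
      using \<open>0 \<le> r\<close> by (auto simp: conic_hull_explicit)
    ultimately show "x \<in> convex hull (conic hull S)"
      using hull_mono by blast
  qed
qed

lemma convex_hull_cone_at:
  assumes "K \<noteq> {}"
  shows "convex hull (cone_at c K) = (+) c ` (convex_cone hull ((\<lambda>x. x - c) ` K))"
proof -
  have "cone_at c K = (+) c ` (conic hull ((\<lambda>x. x - c) ` K))"
    unfolding cone_at_def conic_hull_explicit by force
  then show ?thesis
    using assms by (simp add: convex_hull_translation convex_hull_conic_hull)
qed

lemma convex_cone_sum:
  assumes "convex_cone C" and "\<And>i. i \<in> I \<Longrightarrow> f i \<in> C"
  shows "sum f I \<in> C"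
  using assms(2)
proof (induction I rule: infinite_finite_induct)
  case (insert i I)
  then show ?case by (simp add: convex_cone_add[OF assms(1)])
qed (use convex_cone_contains_0[OF assms(1)] in auto)

lemma convex_cone_hull_contains_line:
  assumes "0 \<in> convex hull T" and "0 \<notin> T"
  obtains z where "z \<noteq> 0" "z \<in> convex_cone hull T" "- z \<in> convex_cone hull T"
proof -
  obtain S u where S: "finite S" "S \<subseteq> T" "\<forall>x\<in>S. 0 \<le> u x" "sum u S = 1"
    and zero: "(\<Sum>v\<in>S. u v *\<^sub>R v) = 0"
    using assms(1) unfolding convex_hull_explicit by blast
  obtain y where y: "y \<in> S" "0 < u y"
    using S(4) sum_nonpos[of S u] by (metis linorder_not_less zero_less_one not_one_le_zero)
  have in_cone: "u v *\<^sub>R v \<in> convex_cone hull T" if "v \<in> S" for v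
    using that S(2,3) by (intro convex_cone_hull_mul hull_inc) auto
  have "- (u y *\<^sub>R y) = (\<Sum>v\<in>S - {y}. u v *\<^sub>R v)"
    using zero sum.remove[OF S(1) y(1), of "\<lambda>v. u v *\<^sub>R v"] by (simp add: add_eq_0_iff)
  also have "\<dots> \<in> convex_cone hull T"
    using in_cone by (intro convex_cone_sum convex_cone_convex_cone_hull) auto
  finally show ?thesis
    using that[of "u y *\<^sub>R y"] in_cone[OF y(1)] y S(2) assms(2) by auto
qed

lemma pointed_at_imp_zero_notin_convex_hull:
  assumes pointed: "pointed_at c (convex hull (cone_at c K))" and "K \<noteq> {}" and "c \<notin> K"
  shows "0 \<notin> convex hull ((\<lambda>x. x - c) ` K)"
proof
  assume "0 \<in> convex hull ((\<lambda>x. x - c) ` K)"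
  moreover have "0 \<notin> (\<lambda>x. x - c) ` K" using \<open>c \<notin> K\<close> by auto
  ultimately obtain z where "z \<noteq> 0" and z: "z \<in> convex_cone hull ((\<lambda>x. x - c) ` K)"
      "- z \<in> convex_cone hull ((\<lambda>x. x - c) ` K)"
    by (rule convex_cone_hull_contains_line)
  then have "c + z \<in> convex hull (cone_at c K)" "c + - z \<in> convex hull (cone_at c K)"
    by (auto simp: convex_hull_cone_at[OF \<open>K \<noteq> {}\<close>])
  then have "c + z \<in> convex hull (cone_at c K) \<inter> (\<lambda>y. 2 *\<^sub>R c - y) ` (convex hull (cone_at c K))"
    by (auto intro!: image_eqI[of _ _ "c + - z"] simp: scaleR_2)
  then show False using pointed \<open>z \<noteq> 0\<close> unfolding pointed_at_def by simp
qed

lemma separating_hyperplane_closed_cone: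
  fixes Q :: "'a::euclidean_space set"
  assumes Q: "convex_cone Q" "closed Q" and "z \<notin> Q"
  obtains v where "v \<bullet> z < 0" "\<And>q. q \<in> Q \<Longrightarrow> 0 \<le> v \<bullet> q"
proof -
  obtain v b where vz: "v \<bullet> z < b" and vQ: "\<And>q. q \<in> Q \<Longrightarrow> b < v \<bullet> q"
    using separating_hyperplane_closed_point[of Q z] assms unfolding convex_cone_def by blast
  have "b < 0" using vQ convex_cone_contains_0[OF Q(1)] by force
  have "0 \<le> v \<bullet> q" if "q \<in> Q" for q
  proof (rule ccontr)
    assume neg: "\<not> 0 \<le> v \<bullet> q"
    then have "(b / (v \<bullet> q)) *\<^sub>R q \<in> Q"
      using \<open>b < 0\<close> that by (intro convex_cone_scaleR[OF Q(1)]) (auto simp: divide_nonpos_neg)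
    then have "b < v \<bullet> ((b / (v \<bullet> q)) *\<^sub>R q)" by (rule vQ)
    then show False using neg by simp
  qed
  then show ?thesis using that vz \<open>b < 0\<close> by force
qed

lemma mem_convex_cone_if_no_strict_separation:
  fixes Q :: "'a::euclidean_space set"
  assumes Q: "convex_cone Q" "closed Q" and "T \<subseteq> Q"
    and w: "\<And>t. t \<in> T \<Longrightarrow> 0 < w \<bullet> t"
    and no_sep: "\<And>u. 0 < u \<bullet> z \<Longrightarrow> \<exists>t\<in>T. 0 \<le> u \<bullet> t"
  shows "z \<in> Q"
proof (rule ccontr)
  assume "z \<notin> Q"
  then obtain v where vz: "v \<bullet> z < 0" and vQ: "\<And>q. q \<in> Q \<Longrightarrow> 0 \<le> v \<bullet> q"
    using separating_hyperplane_closed_cone[OF Q] by blast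
  txt \<open>Tilting -v by a small multiple of -w keeps it positive at z and makes it negative on T.\<close>
  define \<delta> where "\<delta> = - (v \<bullet> z) / (\<bar>w \<bullet> z\<bar> + 1)"
  have "0 < \<delta>" using vz by (simp add: \<delta>_def divide_neg_pos add_nonneg_pos)
  have "\<delta> * (w \<bullet> z) \<le> \<delta> * \<bar>w \<bullet> z\<bar>"
    using \<open>0 < \<delta>\<close> by (intro mult_left_mono) auto
  also have "\<dots> < \<delta> * (\<bar>w \<bullet> z\<bar> + 1)" using \<open>0 < \<delta>\<close> by simp
  also have "\<dots> = - (v \<bullet> z)" by (simp add: \<delta>_def)
  finally have "0 < (- v - \<delta> *\<^sub>R w) \<bullet> z" by (simp add: inner_diff_left)
  then obtain t where "t \<in> T" "0 \<le> (- v - \<delta> *\<^sub>R w) \<bullet> t" using no_sep by blast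
  moreover have "0 \<le> v \<bullet> t" "0 < \<delta> * (w \<bullet> t)"
    using vQ w \<open>0 < \<delta>\<close> \<open>T \<subseteq> Q\<close> \<open>t \<in> T\<close> by auto
  ultimately show False by (simp add: inner_diff_left)
qed

lemma convex_cone_hull_hyperplane_caratheodory:
  fixes P :: "'a::euclidean_space set"
  assumes P: "P \<subseteq> {y. w \<bullet> y = 1}" and x: "x \<in> convex_cone hull P"
  obtains S l where "finite S" "S \<subseteq> P" "card S \<le> DIM('a)" "\<forall>s\<in>S. 0 \<le> l s"
    "x = (\<Sum>s\<in>S. l s *\<^sub>R s)"
proof (cases "x = 0")
  case True
  then show ?thesis using that[of "{}"] by simp
next
  case False
  then obtain r p where x: "x = r *\<^sub>R p" and "0 \<le> r" and p: "p \<in> convex hull P"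
    using x by (auto simp: convex_cone_hull_separate conic_hull_explicit)
  then obtain S \<mu> where S: "finite S" "S \<subseteq> P" "card S \<le> aff_dim P + 1" "\<forall>s\<in>S. 0 \<le> \<mu> s"
    and p_eq: "(\<Sum>s\<in>S. \<mu> s *\<^sub>R s) = p"
    unfolding convex_hull_caratheodory_aff_dim by blast
  have "w \<noteq> 0" using p P by auto
  have "aff_dim P \<le> aff_dim {y. w \<bullet> y = 1}" by (rule aff_dim_subset[OF P])
  also have "\<dots> = int DIM('a) - 1" using \<open>w \<noteq> 0\<close> by simp
  finally have "card S \<le> DIM('a)" using S(3) by linarith
  moreover have "x = (\<Sum>s\<in>S. (r * \<mu> s) *\<^sub>R s)"
    by (simp add: x p_eq[symmetric] scaleR_sum_right)
  ultimately show ?thesis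
    using that[of S "\<lambda>s. r * \<mu> s"] S \<open>0 \<le> r\<close> by auto
qed

lemma normalized_image_subset_hyperplane:
  assumes "\<forall>t\<in>T. 0 < w \<bullet> t"
  shows "(\<lambda>t. t /\<^sub>R (w \<bullet> t)) ` T \<subseteq> {y. w \<bullet> y = 1}"
proof (rule image_subsetI)
  fix t assume "t \<in> T"
  then have "w \<bullet> t \<noteq> 0" using assms by auto
  then show "t /\<^sub>R (w \<bullet> t) \<in> {y. w \<bullet> y = 1}" by simp
qed

lemma convex_cone_hull_normalized_caratheodory:
  fixes T :: "'a::euclidean_space set"
  assumes w: "\<forall>t\<in>T. 0 < w \<bullet> t"
    and z: "z \<in> convex_cone hull ((\<lambda>t. t /\<^sub>R (w \<bullet> t)) ` T)"
  obtains S l where "finite S" "S \<subseteq> T" "card S \<le> DIM('a)" "\<forall>s\<in>S. 0 \<le> l s"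
    "z = (\<Sum>s\<in>S. l s *\<^sub>R s)"
proof -
  have "(\<lambda>t. t /\<^sub>R (w \<bullet> t)) ` T \<subseteq> {y. w \<bullet> y = 1}"
    using w by (rule normalized_image_subset_hyperplane)
  then obtain S' l' where S': "finite S'" "S' \<subseteq> (\<lambda>t. t /\<^sub>R (w \<bullet> t)) ` T" "card S' \<le> DIM('a)"
      "\<forall>s\<in>S'. 0 \<le> l' s" and z_eq: "z = (\<Sum>s\<in>S'. l' s *\<^sub>R s)"
    by (rule convex_cone_hull_hyperplane_caratheodory[OF _ z])
  then obtain S where S: "S \<subseteq> T" "inj_on (\<lambda>t. t /\<^sub>R (w \<bullet> t)) S" "S' = (\<lambda>t. t /\<^sub>R (w \<bullet> t)) ` S"
    by (auto simp: subset_image_inj)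
  have "finite S" "card S \<le> DIM('a)"
    using S S'(1,3) by (auto simp: card_image finite_image_iff)
  moreover have "\<forall>t\<in>S. 0 \<le> l' (t /\<^sub>R (w \<bullet> t)) / (w \<bullet> t)"
  proof
    fix t assume "t \<in> S"
    then have "0 \<le> l' (t /\<^sub>R (w \<bullet> t))" "0 < w \<bullet> t"
      using S S'(4) w by blast+
    then show "0 \<le> l' (t /\<^sub>R (w \<bullet> t)) / (w \<bullet> t)" by simp
  qed
  moreover have "z = (\<Sum>t\<in>S. (l' (t /\<^sub>R (w \<bullet> t)) / (w \<bullet> t)) *\<^sub>R t)"
    unfolding z_eq S(3) by (simp add: sum.reindex[OF S(2)] divide_inverse)
  ultimately show ?thesis by (rule that[OF _ S(1)])
qed

lemma conic_combination_if_no_strict_separation: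
  fixes T :: "'a::euclidean_space set"
  assumes T: "compact T" "0 \<notin> convex hull T"
    and no_sep: "\<And>u. 0 < u \<bullet> z \<Longrightarrow> \<exists>t\<in>T. 0 \<le> u \<bullet> t"
  obtains S l where "finite S" "S \<subseteq> T" "card S \<le> DIM('a)" "\<forall>s\<in>S. 0 \<le> l s"
    "z = (\<Sum>s\<in>S. l s *\<^sub>R s)"
proof -
  obtain w where w: "\<forall>t\<in>T. 0 < w \<bullet> t"
    using separating_hyperplane_closed_0[OF convex_convex_hull
        compact_imp_closed[OF compact_convex_hull[OF T(1)]] T(2)]
    by (meson hull_inc less_trans)
  txt \<open>The cone over the compact base P, which avoids 0, is closed.\<close>
  define P where "P = (\<lambda>t. t /\<^sub>R (w \<bullet> t)) ` T"
  have "compact P"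
    unfolding P_def using w
    by (intro compact_continuous_image T(1) continuous_intros) (auto simp: less_imp_neq[symmetric])
  moreover have "P \<subseteq> {y. w \<bullet> y = 1}"
    unfolding P_def using w by (rule normalized_image_subset_hyperplane)
  then have "convex hull P \<subseteq> {y. w \<bullet> y = 1}"
    by (rule hull_minimal) (rule convex_hyperplane)
  then have "0 \<notin> convex hull P" by auto
  ultimately have "closed (convex_cone hull P)"
    by (simp add: convex_cone_hull_separate closed_conic_hull compact_convex_hull)
  moreover have "T \<subseteq> convex_cone hull P"
  proof
    fix t assume "t \<in> T"
    then have "t = (w \<bullet> t) *\<^sub>R (t /\<^sub>R (w \<bullet> t))"
      using bspec[OF w \<open>t \<in> T\<close>] by simp
    also have "\<dots> \<in> convex_cone hull P"
      using \<open>t \<in> T\<close> w by (intro convex_cone_hull_mul hull_inc) (auto simp: P_def less_imp_le)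
    finally show "t \<in> convex_cone hull P" .
  qed
  ultimately have "z \<in> convex_cone hull P"
    using mem_convex_cone_if_no_strict_separation[OF convex_cone_convex_cone_hull _ _ bspec[OF w] no_sep]
    by blast
  then obtain S l where "finite S" "S \<subseteq> T" "card S \<le> DIM('a)" "\<forall>s\<in>S. 0 \<le> l s"
    "z = (\<Sum>s\<in>S. l s *\<^sub>R s)"
    unfolding P_def by (rule convex_cone_hull_normalized_caratheodory[OF w])
  then show ?thesis by (rule that)
qed

lemma mem_co_sph_if_conic_combination:
  assumes "X \<noteq> {}" "\<forall>x\<in>X. 0 \<le> l x" "a - c = (\<Sum>x\<in>X. l x *\<^sub>R (x - c))" "a \<in> sphere c R"
  shows "a \<in> co_sph c R X"
proof -
  have "a - c \<in> convex_cone hull ((\<lambda>x. x - c) ` X)"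
    unfolding assms(3) using assms(2)
    by (intro convex_cone_sum convex_cone_convex_cone_hull convex_cone_hull_mul hull_inc) auto
  then have "a \<in> convex hull (cone_at c X)"
    unfolding convex_hull_cone_at[OF assms(1)] by (force intro: image_eqI[of _ _ "a - c"])
  then show ?thesis using assms(4) by (simp add: co_sph_def)
qed

lemma two_le_card_if_conic_combination:
  fixes a c :: "'a::real_normed_vector"
  assumes "R > 0" "finite X" "X \<subseteq> sphere c R" "a \<in> sphere c R" "a \<notin> X"
    and l: "\<forall>x\<in>X. 0 \<le> l x" and a: "a - c = (\<Sum>x\<in>X. l x *\<^sub>R (x - c))"
  shows "2 \<le> card X"
proof (rule ccontr)
  assume "\<not> 2 \<le> card X"
  then have "card X = 0 \<or> card X = Suc 0" by linarith
  then consider "X = {}" | x where "X = {x}"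
    using \<open>finite X\<close> by (auto simp: card_1_singleton_iff)
  then show False
  proof cases
    case 1
    then have "a = c" using a by simp
    then show False using assms(1,4) by simp
  next
    case (2 x)
    then have ax: "a - c = l x *\<^sub>R (x - c)" "0 \<le> l x" using a l by auto
    have "norm (a - c) = R" "norm (x - c) = R"
      using assms(3,4) 2 by (auto simp: dist_norm norm_minus_commute)
    then have "l x = 1" using arg_cong[OF ax(1), of norm] ax(2) \<open>R > 0\<close> by simp
    then show False using ax(1) 2 \<open>a \<notin> X\<close> by simp
  qed
qed

lemma spherical_caratheodory:
  fixes E :: "'a::euclidean_space set"
  assumes "R > 0" and E: "closed E" and a: "a \<in> coR R E" "dist c a = R"
    and disj: "ball c R \<inter> E = {}" and "a \<notin> E"
    and pointed: "pointed_at c (convex hull (cone_at c (E \<inter> sphere c R)))"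
  shows "\<exists>X. finite X \<and> X \<subseteq> E \<inter> sphere c R \<and> 2 \<le> card X \<and> card X \<le> DIM('a)
    \<and> a \<in> co_sph c R X"
proof -
  define K where "K = E \<inter> sphere c R"
  define T where "T = (\<lambda>x. x - c) ` K"
  have "K \<noteq> {}"
    using two_contact_points[OF \<open>R > 0\<close> E a disj \<open>a \<notin> E\<close>] unfolding K_def by blast
  have "compact T"
    unfolding T_def K_def using E
    by (intro compact_continuous_image continuous_intros closed_Int_compact) auto
  moreover have "0 \<notin> convex hull T"
    unfolding T_def using \<open>R > 0\<close>
    by (intro pointed_at_imp_zero_notin_convex_hull[OF pointed[folded K_def] \<open>K \<noteq> {}\<close>])
      (simp add: K_def)
  moreover have "\<exists>t\<in>T. 0 \<le> u \<bullet> t" if "0 < u \<bullet> (a - c)" for u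
    using exists_contact_point_in_halfspace[OF E a disj that] unfolding T_def K_def by blast
  ultimately obtain S l where S: "finite S" "S \<subseteq> T" "card S \<le> DIM('a)" "\<forall>s\<in>S. 0 \<le> l s"
    and a_eq: "a - c = (\<Sum>s\<in>S. l s *\<^sub>R s)"
    by (rule conic_combination_if_no_strict_separation)
  define X where "X = (\<lambda>t. t + c) ` S"
  have X: "finite X" "X \<subseteq> K" "card X = card S"
    using S(1,2) by (auto simp: X_def T_def card_image)
  have a_comb: "a - c = (\<Sum>x\<in>X. l (x - c) *\<^sub>R (x - c))"
    unfolding a_eq X_def by (simp add: sum.reindex inj_on_def)
  have nonneg: "\<forall>x\<in>X. 0 \<le> l (x - c)" using S(4) by (auto simp: X_def)
  have "X \<subseteq> sphere c R" "a \<notin> X" "a \<in> sphere c R"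
    using X(2) \<open>a \<notin> E\<close> a(2) unfolding K_def by auto
  then have "2 \<le> card X"
    using two_le_card_if_conic_combination[OF \<open>R > 0\<close> X(1) _ _ _ nonneg a_comb] by blast
  then have "X \<noteq> {}" by auto
  have "a \<in> co_sph c R X"
    by (rule mem_co_sph_if_conic_combination[OF \<open>X \<noteq> {}\<close> nonneg a_comb \<open>a \<in> sphere c R\<close>])
  moreover have "card X \<le> DIM('a)" using X(3) S(3) by simp
  moreover have "X \<subseteq> E \<inter> sphere c R" using X(2) unfolding K_def .
  ultimately show ?thesis using X(1) \<open>2 \<le> card X\<close> by blast
qed

theorem mainTheorem4:
  fixes E :: "'a::euclidean_space set" and R :: real and a :: 'a
  assumes "R > 0" and "body E" and "a \<in> frontier (coR R E) - E"
  shows "(\<exists>c. a \<in> sphere c R \<and> ball c R \<inter> coR R E = {})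
    \<and> (\<forall>c. a \<in> sphere c R \<and> ball c R \<inter> coR R E = {} \<longrightarrow>
          (\<exists>x y. x \<noteq> y \<and> x \<in> frontier E \<inter> sphere c R \<and> y \<in> frontier E \<inter> sphere c R)
        \<and> (pointed_at c (convex hull (cone_at c (frontier E \<inter> sphere c R))) \<longrightarrow>
            (\<exists>X. finite X \<and> X \<subseteq> frontier E \<inter> sphere c R \<and> 2 \<le> card X \<and> card X \<le> DIM('a)
                 \<and> a \<in> co_sph c R X)))"
proof (intro conjI allI impI)
  have E: "closed E" using assms(2) by (simp add: body_def)
  have a: "a \<in> frontier (coR R E)" "a \<notin> E" using assms(3) by auto
  then have "a \<in> coR R E" using closed_coR frontier_subset_closed by blast
  show "\<exists>c. a \<in> sphere c R \<and> ball c R \<inter> coR R E = {}"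
    using supporting_ball_exists[OF a(1)] .
  fix c assume c: "a \<in> sphere c R \<and> ball c R \<inter> coR R E = {}"
  then have disj: "ball c R \<inter> E = {}" using subset_coR by blast
  have "E \<inter> sphere c R \<subseteq> frontier E"
    using closed_Int_closure_disjoint_open_subset_frontier[OF E open_ball disj] \<open>R > 0\<close> by auto
  then have contact: "frontier E \<inter> sphere c R = E \<inter> sphere c R"
    using frontier_subset_closed[OF E] by blast
  have "dist c a = R" using c by simp
  show "\<exists>x y. x \<noteq> y \<and> x \<in> frontier E \<inter> sphere c R \<and> y \<in> frontier E \<inter> sphere c R"
    unfolding contact by (rule two_contact_points[OF \<open>R > 0\<close> E \<open>a \<in> coR R E\<close> \<open>dist c a = R\<close> disj a(2)])
  assume "pointed_at c (convex hull (cone_at c (frontier E \<inter> sphere c R)))"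
  then show "\<exists>X. finite X \<and> X \<subseteq> frontier E \<inter> sphere c R \<and> 2 \<le> card X \<and> card X \<le> DIM('a)
      \<and> a \<in> co_sph c R X"
    unfolding contact
    by (rule spherical_caratheodory[OF \<open>R > 0\<close> E \<open>a \<in> coR R E\<close> \<open>dist c a = R\<close> disj a(2)])
qed

end
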